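(* Let $H(x,p)$ be a smooth real function and consider the Hamiltonian system $\dot x=H_p$, $\dot p=-H_x$. Consider the scheme $$\frac{x_{n+1}-x_n}{\delta_n}=\frac{H(x_{n+1},p_{n+1})-H(x_{n+1},p_n)}{p_{n+1}-p_n},\qquad \frac{p_{n+1}-p_n}{\delta_n}=\frac{H(x_n,p_n)-H(x_{n+1},p_n)}{x_{n+1}-x_n},$$ where the difference quotients are understood as the corresponding partial derivatives when the denominators vanish. Take $$\delta_n=\frac{2}{\omega_n\cot\frac{\omega_nh_n}{2}+H_{xp}},\qquad \omega_n=\sqrt{H_{xx}H_{pp}-H_{xp}^2},$$ with all derivatives of $H$ evaluated at a point $(\bar x,\bar p)$. Then the scheme is locally exact at $(\bar x,\bar p)$.
   Context: $h_n$ is the time step. The expression $\omega\cot(\omega h/2)$ is an analytic function of $\omega^2$; it is interpreted as such when $\omega^2\le 0$. Linearizing the Hamiltonian system at $(\bar x,\bar p)$, with $x=\bar x+\xi$ and $p=\bar p+\eta$, gives $$\frac{d}{dt}\begin{pmatrix}\xi\\ \eta\end{pmatrix}=F'\begin{pmatrix}\xi\\ \eta\end{pmatrix}+F,\qquad F=\begin{pmatrix}H_p\\ -H_x\end{pmatrix},\qquad F'=\begin{pmatrix}H_{xp}&H_{pp}\\ -H_{xx}&-H_{xp}\end{pmatrix},$$ with derivatives evaluated at $(\bar x,\bar p)$; $F'$ is assumed invertible. The exact discretization of this linear system with time step $h_n$ is $$(\xi_{n+1},\eta_{n+1})^T=e^{h_nF'}(\xi_n,\eta_n)^T+(e^{h_nF'}-1)(F')^{-1}F.$$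 The linearization of the scheme at $(\bar x,\bar p)$ is obtained as follows: - substitute $x_n=\bar x+\xi_n$, $p_n=\bar p+\eta_n$ (and likewise for $n+1$); - keep $\delta_n$ fixed at its value determined by $(\bar x,\bar p)$ and $h_n$; - retain only terms up to first order in $\xi,\eta$. The scheme is locally exact at $(\bar x,\bar p)$ if this linear relation coincides with the exact discretization above, as a relation determining $(\xi_{n+1},\eta_{n+1})$ from $(\xi_n,\eta_n)$. *)

theory Defs
  imports "HOL-Analysis.Analysis"
begin

definition pdx :: "(real \<Rightarrow> real \<Rightarrow> real) \<Rightarrow> real \<Rightarrow> real \<Rightarrow> real" where
  "pdx f x p = deriv (\<lambda>t. f t p) x"

definition pdp :: "(real \<Rightarrow> real \<Rightarrow> real) \<Rightarrow> real \<Rightarrow> real \<Rightarrow> real" where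
  "pdp f x p = deriv (\<lambda>t. f x t) p"

fun pds :: "bool list \<Rightarrow> (real \<Rightarrow> real \<Rightarrow> real) \<Rightarrow> real \<Rightarrow> real \<Rightarrow> real" where
  "pds [] f = f"
| "pds (b # bs) f = (if b then pdx else pdp) (pds bs f)"

definition smooth2 :: "(real \<Rightarrow> real \<Rightarrow> real) \<Rightarrow> bool" where
  "smooth2 f \<longleftrightarrow> (\<forall>bs.
      continuous_on UNIV (\<lambda>(x, p). pds bs f x p) \<and>
      (\<forall>x p. (\<lambda>t. pds bs f t p) differentiable (at x) \<and>
             (\<lambda>t. pds bs f x t) differentiable (at p)))"

section \<open>omega cot(omega h/2) as an analytic function of s = omega^2\<close>

definition wcot :: "real \<Rightarrow> real \<Rightarrow> real" where
  "wcot s h = (if s > 0 then sqrt s * cot (sqrt s * h / 2)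
               else if s = 0 then 2 / h
               else sqrt (- s) * cosh (sqrt (- s) * h / 2) / sinh (sqrt (- s) * h / 2))"

definition rhs1 :: "(real \<Rightarrow> real \<Rightarrow> real) \<Rightarrow> real \<Rightarrow> real \<Rightarrow> real \<Rightarrow> real \<Rightarrow> real" where
  "rhs1 H x0 p0 x1 p1 = (if p1 = p0 then pdp H x1 p0
                         else (H x1 p1 - H x1 p0) / (p1 - p0))"

definition rhs2 :: "(real \<Rightarrow> real \<Rightarrow> real) \<Rightarrow> real \<Rightarrow> real \<Rightarrow> real \<Rightarrow> real \<Rightarrow> real" where
  "rhs2 H x0 p0 x1 p1 = (if x1 = x0 then - pdx H x0 p0
                         else (H x0 p0 - H x1 p0) / (x1 - x0))"

definition scheme_res :: "(real \<Rightarrow> real \<Rightarrow> real) \<Rightarrow> real \<Rightarrow> real \<times> real \<times> real \<times> real \<Rightarrow> real \<times> real" where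
  "scheme_res H \<delta> z = (case z of (x0, p0, x1, p1) \<Rightarrow>
      ((x1 - x0) / \<delta> - rhs1 H x0 p0 x1 p1, (p1 - p0) / \<delta> - rhs2 H x0 p0 x1 p1))"

definition Fvec :: "(real \<Rightarrow> real \<Rightarrow> real) \<Rightarrow> real \<Rightarrow> real \<Rightarrow> real^2" where
  "Fvec H x p = vector [pdp H x p, - pdx H x p]"

definition Fjac :: "(real \<Rightarrow> real \<Rightarrow> real) \<Rightarrow> real \<Rightarrow> real \<Rightarrow> real^2^2" where
  "Fjac H x p = vector [vector [pdp (pdx H) x p, pdp (pdp H) x p],
                        vector [- pdx (pdx H) x p, - pdp (pdx H) x p]]"

definition mpow :: "real^'n^'n \<Rightarrow> nat \<Rightarrow> real^'n^'n" where
  "mpow A n = ((\<lambda>B. A ** B) ^^ n) (mat 1)"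

definition mexp :: "real^'n^'n \<Rightarrow> real^'n^'n" where
  "mexp A = (\<Sum>n. (1 / fact n) *\<^sub>R mpow A n)"

text \<open>Exact discretization with step h of d/dt z = F' z + F.\<close>
definition exact_step :: "(real \<Rightarrow> real \<Rightarrow> real) \<Rightarrow> real \<Rightarrow> real \<Rightarrow> real \<Rightarrow> real^2 \<Rightarrow> real^2" where
  "exact_step H x p h z =
     mexp (h *\<^sub>R Fjac H x p) *v z
     + (mexp (h *\<^sub>R Fjac H x p) - mat 1) *v (matrix_inv (Fjac H x p) *v Fvec H x p)"

end

theory Submission
  imports Defs
begin

text \<open>Freeze \<open>\<delta>\<close> and linearise the scheme at \<open>(x\<^sub>n, p\<^sub>n) = (x\<^sub>n\<^sub>+\<^sub>1, p\<^sub>n\<^sub>+\<^sub>1) = (x\<^sub>b, p\<^sub>b)\<close>.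
  By the mean value theorem a difference quotient linearises to the average of the second
  derivatives at its two endpoints, so (using \<open>H\<^sub>p\<^sub>x = H\<^sub>x\<^sub>p\<close>) the linear relation is
  \<open>K (z\<^sub>1 - z\<^sub>0) = A (z\<^sub>0 + z\<^sub>1) + 2 F\<close>
  with \<open>A = F'\<close> and \<open>K = 2 / \<delta> - H\<^sub>x\<^sub>p = \<omega> cot (\<omega> h / 2)\<close>.
  As \<open>A\<close> is trace-free, \<open>A\<^sup>2 = - \<omega>\<^sup>2\<close>, hence \<open>e\<^sup>h\<^sup>A = cos (\<omega> h) + (sin (\<omega> h) / \<omega>) A\<close>,
  and the half-angle formulas give \<open>(K - A) e\<^sup>h\<^sup>A = K + A\<close>.
  Since \<open>det (K - A) = K\<^sup>2 + \<omega>\<^sup>2 \<noteq> 0\<close>, the linear relation is therefore solved exactly by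
  \<open>z\<^sub>1 = e\<^sup>h\<^sup>A z\<^sub>0 + (e\<^sup>h\<^sup>A - 1) A\<^sup>-\<^sup>1 F\<close>.\<close>

lemma smooth2_has_real_derivative_x:
  assumes "smooth2 H"
  shows "((\<lambda>t. pds bs H t p) has_real_derivative pds (True # bs) H x p) (at x)"
  using assms unfolding smooth2_def by (simp add: pdx_def DERIV_deriv_iff_real_differentiable)

lemma smooth2_has_real_derivative_p:
  assumes "smooth2 H"
  shows "((\<lambda>t. pds bs H x t) has_real_derivative pds (False # bs) H x p) (at p)"
  using assms unfolding smooth2_def by (simp add: pdp_def DERIV_deriv_iff_real_differentiable)

lemma smooth2_continuous_at:
  assumes "smooth2 H"
  shows "continuous (at z) (\<lambda>(x, p). pds bs H x p)"
  using assms unfolding smooth2_def by (metis continuous_on_eq_continuous_at open_UNIV UNIV_I)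

lemma smooth2_continuous_at_swap:
  assumes "smooth2 H"
  shows "continuous (at z) (\<lambda>(p, x). pds bs H x p)"
proof -
  have "continuous_on (UNIV \<times> UNIV) (\<lambda>(x, p). pds bs H x p)"
    using assms unfolding smooth2_def by simp
  then have "continuous_on (UNIV \<times> UNIV) (\<lambda>(p, x). pds bs H x p)"
    by (rule continuous_on_swap_args)
  then show ?thesis by (metis continuous_on_eq_continuous_at open_UNIV UNIV_I UNIV_Times_UNIV)
qed

lemma second_difference_mean_value:
  fixes f fx fxp :: "real \<Rightarrow> real \<Rightarrow> real"
  assumes t: "t > 0"
    and fx: "\<And>u v. ((\<lambda>u. f u v) has_real_derivative fx u v) (at u)"
    and fxp: "\<And>u v. ((\<lambda>v. fx u v) has_real_derivative fxp u v) (at v)"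
  shows "\<exists>c d. x < c \<and> c < x + t \<and> p < d \<and> d < p + t \<and>
           f (x + t) (p + t) - f (x + t) p - f x (p + t) + f x p = t * t * fxp c d"
proof -
  have "((\<lambda>u. f u (p + t) - f u p) has_real_derivative fx u (p + t) - fx u p) (at u)" for u
    by (intro derivative_intros fx)
  then obtain c where c: "x < c" "c < x + t"
    "f (x + t) (p + t) - f (x + t) p - (f x (p + t) - f x p) = t * (fx c (p + t) - fx c p)"
    using MVT2[of x "x + t" "\<lambda>u. f u (p + t) - f u p" "\<lambda>u. fx u (p + t) - fx u p"] t by auto
  obtain d where d: "p < d" "d < p + t" "fx c (p + t) - fx c p = t * fxp c d"
    using MVT2[of p "p + t" "fx c" "fxp c"] t fxp by auto
  show ?thesis using c d by (intro exI[of _ c] exI[of _ d]) (simp add: algebra_simps)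
qed

lemma mixed_partials_eq:
  fixes f fx fp fxp fpx :: "real \<Rightarrow> real \<Rightarrow> real"
  assumes fx: "\<And>u v. ((\<lambda>u. f u v) has_real_derivative fx u v) (at u)"
    and fp: "\<And>u v. ((\<lambda>v. f u v) has_real_derivative fp u v) (at v)"
    and fxp: "\<And>u v. ((\<lambda>v. fx u v) has_real_derivative fxp u v) (at v)"
    and fpx: "\<And>u v. ((\<lambda>u. fp u v) has_real_derivative fpx u v) (at u)"
    and cont_xp: "continuous (at (x, p)) (\<lambda>(u, v). fxp u v)"
    and cont_px: "continuous (at (x, p)) (\<lambda>(u, v). fpx u v)"
  shows "fxp x p = fpx x p"
proof (rule ccontr)
  assume ne: "fxp x p \<noteq> fpx x p"
  define e where "e = \<bar>fxp x p - fpx x p\<bar> / 2"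
  have e: "e > 0" using ne by (simp add: e_def)
  obtain r1 where r1: "r1 > 0" "\<And>z. dist z (x, p) < r1 \<Longrightarrow> \<bar>(\<lambda>(u, v). fxp u v) z - fxp x p\<bar> < e"
    using cont_xp e unfolding continuous_at_eps_delta dist_real_def by fastforce
  obtain r2 where r2: "r2 > 0" "\<And>z. dist z (x, p) < r2 \<Longrightarrow> \<bar>(\<lambda>(u, v). fpx u v) z - fpx x p\<bar> < e"
    using cont_px e unfolding continuous_at_eps_delta dist_real_def by fastforce
  define t where "t = min r1 r2 / 4"
  have t: "t > 0" using r1 r2 by (simp add: t_def)
  have close: "dist (u, v) (x, p) < min r1 r2" if "x < u" "u < x + t" "p < v" "v < p + t" for u v
  proof -
    have "dist (u, v) (x, p) \<le> dist u x + dist v p"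
      by (simp add: dist_Pair_Pair sqrt_sum_squares_le_sum)
    also have "\<dots> < min r1 r2" using that t unfolding t_def dist_real_def by linarith
    finally show ?thesis .
  qed
  obtain c d where cd: "x < c" "c < x + t" "p < d" "d < p + t"
    and \<Delta>1: "f (x + t) (p + t) - f (x + t) p - f x (p + t) + f x p = t * t * fxp c d"
    using second_difference_mean_value[OF t fx fxp] by blast
  obtain c' d' where cd': "p < c'" "c' < p + t" "x < d'" "d' < x + t"
    and \<Delta>2: "f (x + t) (p + t) - f x (p + t) - f (x + t) p + f x p = t * t * fpx d' c'"
    using second_difference_mean_value
        [of t "\<lambda>v u. f u v" "\<lambda>v u. fp u v" "\<lambda>v u. fpx u v" p x, OF t fp fpx]
    by blast
  have "fxp c d = fpx d' c'" using \<Delta>1 \<Delta>2 t by (simp add: algebra_simps)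
  moreover have "\<bar>fxp c d - fxp x p\<bar> < e" using r1(2)[of "(c, d)"] close[of c d] cd by simp
  moreover have "\<bar>fpx d' c' - fpx x p\<bar> < e" using r2(2)[of "(d', c')"] close[of d' c'] cd' by simp
  ultimately show False unfolding e_def by (simp add: abs_if split: if_splits)
qed

lemma smooth2_pdx_pdp_commute:
  assumes "smooth2 H"
  shows "pdx (pdp H) x p = pdp (pdx H) x p"
  using mixed_partials_eq[of H "pdx H" "pdp H" "pdp (pdx H)" "pdx (pdp H)" x p]
    smooth2_has_real_derivative_x[OF assms, of "[]"] smooth2_has_real_derivative_p[OF assms, of "[]"]
    smooth2_has_real_derivative_p[OF assms, of "[True]"] smooth2_has_real_derivative_x[OF assms, of "[False]"]
    smooth2_continuous_at[OF assms, of "(x, p)" "[False, True]"]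
    smooth2_continuous_at[OF assms, of "(x, p)" "[True, False]"]
  by simp

definition divided_difference :: "(real \<Rightarrow> real) \<Rightarrow> (real \<Rightarrow> real) \<Rightarrow> real \<Rightarrow> real \<Rightarrow> real" where
  "divided_difference f f' a b = (if b = a then f' a else (f b - f a) / (b - a))"

lemma divided_difference_same [simp]: "divided_difference f f' a a = f' a"
  by (simp add: divided_difference_def)

lemma divided_difference_mean_value:
  assumes f': "\<And>t. (f has_real_derivative f' t) (at t)"
  shows "\<exists>z. min a b \<le> z \<and> z \<le> max a b \<and>
           divided_difference f f' a b - B * (a + b) / 2 = f' z - B * z"
proof (cases "b = a")
  case True
  then show ?thesis by (intro exI[of _ a]) simp
next
  case False
  define g where "g t = f t - B * t\<^sup>2 / 2" for t
  have g': "(g has_real_derivative f' t - B * t) (at t)" for t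
    unfolding g_def by (auto intro!: derivative_eq_intros f')
  have "min a b < max a b" using False by (auto simp: min_def max_def)
  then obtain z where z: "min a b < z" "z < max a b"
    and mvt: "g (max a b) - g (min a b) = (max a b - min a b) * (f' z - B * z)"
    using MVT2[of "min a b" "max a b" g "\<lambda>t. f' t - B * t"] g' by blast
  have "g b - g a = (b - a) * (f' z - B * z)"
    using mvt by (cases "a \<le> b") (auto simp: min_def max_def algebra_simps)
  then have "divided_difference f f' a b - B * (a + b) / 2 = f' z - B * z"
    using False unfolding g_def divided_difference_def by (simp add: field_simps power2_eq_square)
  with z show ?thesis by (intro exI[of _ z]) simp
qed

lemma square_le_between:
  fixes a b z c :: real
  assumes "min a b \<le> z" "z \<le> max a b"
  shows "(z - c)\<^sup>2 \<le> (a - c)\<^sup>2 + (b - c)\<^sup>2"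
proof -
  have "\<bar>z - c\<bar> \<le> max \<bar>a - c\<bar> \<bar>b - c\<bar>"
    using assms by (auto simp: abs_if max_def min_def split: if_splits)
  then have "\<bar>z - c\<bar>\<^sup>2 \<le> (max \<bar>a - c\<bar> \<bar>b - c\<bar>)\<^sup>2" by (intro power_mono) auto
  also have "\<dots> \<le> (a - c)\<^sup>2 + (b - c)\<^sup>2" by (auto simp: max_def)
  finally show ?thesis by simp
qed

lemma divided_difference_has_derivative:
  fixes f Q :: "real \<Rightarrow> real \<Rightarrow> real"
  assumes f': "\<And>x p. ((\<lambda>t. f x t) has_real_derivative Q x p) (at p)"
    and Q': "((\<lambda>(x, p). Q x p) has_derivative (\<lambda>(u, v). A * u + B * v)) (at (x0, p0))"
  shows "((\<lambda>(x, a, b). divided_difference (f x) (Q x) a b)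
           has_derivative (\<lambda>(u, v, w). A * u + B * (v + w) / 2)) (at (x0, p0, p0))"
  unfolding has_derivative_at_alt
proof (intro conjI allI impI)
  show "bounded_linear (\<lambda>(u::real, v::real, w::real). A * u + B * (v + w) / 2)"
    unfolding linear_conv_bounded_linear[symmetric]
    by (rule linearI) (simp_all add: split_beta field_simps)
next
  fix e :: real
  assume "e > 0"
  with Q' obtain d where d: "d > 0"
    "\<And>y. norm (y - (x0, p0)) < d \<Longrightarrow>
       \<bar>(\<lambda>(x, p). Q x p) y - Q x0 p0 - (\<lambda>(u, v). A * u + B * v) (y - (x0, p0))\<bar>
         \<le> e * norm (y - (x0, p0))"
    unfolding has_derivative_at_alt by fastforce
  have bound: "norm (divided_difference (f x) (Q x) a b - Q x0 p0 - (A * (x - x0) + B * (a - p0 + (b - p0)) / 2))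
          \<le> e * norm ((x, a, b) - (x0, p0, p0))"
    if near: "norm ((x, a, b) - (x0, p0, p0)) < d" for x a b
  proof -
    obtain z where z: "min a b \<le> z" "z \<le> max a b"
      and dd: "divided_difference (f x) (Q x) a b - B * (a + b) / 2 = Q x z - B * z"
      using divided_difference_mean_value[OF f'] by blast
    have le: "norm ((x, z) - (x0, p0)) \<le> norm ((x, a, b) - (x0, p0, p0))"
      using square_le_between[OF z, of p0] by (simp add: norm_Pair)
    have "divided_difference (f x) (Q x) a b - Q x0 p0 - (A * (x - x0) + B * (a - p0 + (b - p0)) / 2)
        = Q x z - Q x0 p0 - (A * (x - x0) + B * (z - p0))"
      using dd by (simp add: field_simps)
    also have "\<bar>\<dots>\<bar> \<le> e * norm ((x, z) - (x0, p0))"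
      using d(2)[of "(x, z)"] le near by simp
    also have "\<dots> \<le> e * norm ((x, a, b) - (x0, p0, p0))"
      using le \<open>e > 0\<close> by (simp add: mult_left_mono)
    finally show ?thesis by simp
  qed
  show "\<exists>d>0. \<forall>y. norm (y - (x0, p0, p0)) < d \<longrightarrow>
     norm ((\<lambda>(x, a, b). divided_difference (f x) (Q x) a b) y
         - (\<lambda>(x, a, b). divided_difference (f x) (Q x) a b) (x0, p0, p0)
         - (\<lambda>(u, v, w). A * u + B * (v + w) / 2) (y - (x0, p0, p0)))
       \<le> e * norm (y - (x0, p0, p0))"
    using d(1) bound by (auto simp: add_divide_distrib)
qed

lemma has_derivative_of_partials:
  fixes Q Qp :: "real \<Rightarrow> real \<Rightarrow> real"
  assumes Qx: "((\<lambda>x. Q x p0) has_real_derivative A) (at x0)"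
    and Qp: "\<And>x p. ((\<lambda>p. Q x p) has_real_derivative Qp x p) (at p)"
    and cont: "continuous (at (x0, p0)) (\<lambda>(x, p). Qp x p)"
  shows "((\<lambda>(x, p). Q x p) has_derivative (\<lambda>(u, v). A * u + Qp x0 p0 * v)) (at (x0, p0))"
proof -
  have "continuous (at (x0, p0)) (\<lambda>z. blinfun_mult_right ((\<lambda>(x, p). Qp x p) z))"
    using bounded_linear.continuous[OF bounded_linear_blinfun_mult_right cont] .
  then have "continuous (at (x0, p0) within UNIV \<times> UNIV) (\<lambda>(x, p). blinfun_mult_right (Qp x p))"
    by (simp add: case_prod_beta')
  with Qx Qp have "((\<lambda>(x, p). Q x p) has_derivative (\<lambda>(u, v). A * u + blinfun_mult_right (Qp x0 p0) v))
      (at (x0, p0) within UNIV \<times> UNIV)"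
    by (intro has_derivative_partialsI) (auto simp: has_field_derivative_def)
  then show ?thesis by simp
qed

definition scheme_linearization ::
    "(real \<Rightarrow> real \<Rightarrow> real) \<Rightarrow> real \<Rightarrow> real \<Rightarrow> real \<Rightarrow> real \<times> real \<times> real \<times> real \<Rightarrow> real \<times> real"
  where
  "scheme_linearization H xb pb \<delta> = (\<lambda>(\<xi>0, \<eta>0, \<xi>1, \<eta>1).
     ((\<xi>1 - \<xi>0) / \<delta> - (pdp (pdx H) xb pb * \<xi>1 + pdp (pdp H) xb pb * (\<eta>0 + \<eta>1) / 2),
      (\<eta>1 - \<eta>0) / \<delta> + (pdp (pdx H) xb pb * \<eta>0 + pdx (pdx H) xb pb * (\<xi>0 + \<xi>1) / 2)))"

lemma scheme_res_has_derivative: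
  assumes smooth: "smooth2 H" and "\<delta> \<noteq> 0"
  shows "(scheme_res H \<delta> has_derivative scheme_linearization H xb pb \<delta>) (at (xb, pb, xb, pb))"
proof -
  define Hxx Hxp Hpp where "Hxx = pdx (pdx H) xb pb" and "Hxp = pdp (pdx H) xb pb"
    and "Hpp = pdp (pdp H) xb pb"
  note Dx = smooth2_has_real_derivative_x[OF smooth] and Dp = smooth2_has_real_derivative_p[OF smooth]
  define q1 where "q1 = (\<lambda>(x, a, b). divided_difference (H x) (pdp H x) a b)"
  define q2 where "q2 = (\<lambda>(p, a, b). divided_difference (\<lambda>x. H x p) (\<lambda>x. pdx H x p) a b)"
  have "((\<lambda>(x, p). pdp H x p) has_derivative (\<lambda>(u, v). Hxp * u + Hpp * v)) (at (xb, pb))"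
    using has_derivative_of_partials[OF Dx[of "[False]"] Dp[of "[False]"]]
      smooth2_continuous_at[OF smooth, of "(xb, pb)" "[False, False]"]
    by (simp add: smooth2_pdx_pdp_commute[OF smooth] Hxp_def Hpp_def)
  then have q1: "(q1 has_derivative (\<lambda>(u, v, w). Hxp * u + Hpp * (v + w) / 2)) (at (xb, pb, pb))"
    unfolding q1_def using Dp[of "[]"] by (intro divided_difference_has_derivative) simp_all
  have "((\<lambda>(p, x). pdx H x p) has_derivative (\<lambda>(u, v). Hxp * u + Hxx * v)) (at (pb, xb))"
    using has_derivative_of_partials[of "\<lambda>p x. pds [True] H x p", OF Dp[of "[True]"] Dx[of "[True]"]]
      smooth2_continuous_at_swap[OF smooth, of "(pb, xb)" "[True, True]"]
    by (simp add: Hxp_def Hxx_def)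
  then have q2: "(q2 has_derivative (\<lambda>(u, v, w). Hxp * u + Hxx * (v + w) / 2)) (at (pb, xb, xb))"
    unfolding q2_def using Dx[of "[]"]
    by (intro divided_difference_has_derivative[of "\<lambda>p x. H x p"]) simp_all
  define l1 l2 :: "real \<times> real \<times> real \<times> real \<Rightarrow> real \<times> real \<times> real"
    where "l1 z = (fst (snd (snd z)), fst (snd z), snd (snd (snd z)))"
      and "l2 z = (fst (snd z), fst z, fst (snd (snd z)))" for z
  have l1: "(l1 has_derivative l1) (at (xb, pb, xb, pb))"
    and l2: "(l2 has_derivative l2) (at (xb, pb, xb, pb))"
    unfolding l1_def[abs_def] l2_def[abs_def]
    by (intro has_derivative_Pair has_derivative_fst has_derivative_snd has_derivative_ident)+
  have "((\<lambda>z. q1 (l1 z)) has_derivative (\<lambda>z. (\<lambda>(u, v, w). Hxp * u + Hpp * (v + w) / 2) (l1 z)))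
      (at (xb, pb, xb, pb))"
    by (rule has_derivative_compose[OF l1]) (simp add: l1_def q1)
  moreover have "((\<lambda>z. q2 (l2 z)) has_derivative (\<lambda>z. (\<lambda>(u, v, w). Hxp * u + Hxx * (v + w) / 2) (l2 z)))
      (at (xb, pb, xb, pb))"
    by (rule has_derivative_compose[OF l2]) (simp add: l2_def q2)
  moreover have "scheme_res H \<delta> = (\<lambda>z. ((fst (snd (snd z)) - fst z) / \<delta> - q1 (l1 z),
                                       (snd (snd (snd z)) - fst (snd z)) / \<delta> + q2 (l2 z)))"
    by (auto simp: fun_eq_iff scheme_res_def rhs1_def rhs2_def q1_def q2_def l1_def l2_def
        divided_difference_def minus_divide_left)
  ultimately show ?thesis
    using \<open>\<delta> \<noteq> 0\<close>
    by (auto intro!: derivative_eq_intros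
        simp: l1_def l2_def scheme_linearization_def Hxx_def Hxp_def Hpp_def)
qed

lemma matrix_inv_right:
  fixes A :: "'a::semiring_1^'n^'m"
  assumes "invertible A"
  shows "A ** matrix_inv A = mat 1"
  using someI_ex[OF assms[unfolded invertible_def]] unfolding matrix_inv_def by blast

lemma scaleR_mat_1_mult_vector: "(k *\<^sub>R mat 1) *v (z :: real^'n) = k *\<^sub>R z"
  by (metis scaleR_matrix_vector_assoc matrix_vector_mul_lid)

lemma matrix_diff_rdistrib:
  fixes A B :: "'a::ring_1^'n^'m" and C :: "'a^'p^'n"
  shows "(A - B) ** C = A ** C - B ** C"
  by (simp add: matrix_matrix_mult_def vec_eq_iff sum_subtractf left_diff_distrib)

lemma implicit_midpoint_step_iff:
  fixes A E :: "real^'n^'n" and K :: real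
  assumes shift: "(K *\<^sub>R mat 1 - A) ** E = K *\<^sub>R mat 1 + A"
    and inv_shift: "invertible (K *\<^sub>R mat 1 - A)" and inv_A: "invertible A"
  shows "K *\<^sub>R (z1 - z0) = A *v (z0 + z1) + 2 *\<^sub>R f
     \<longleftrightarrow> z1 = E *v z0 + (E - mat 1) *v (matrix_inv A *v f)"
proof -
  define M where "M = K *\<^sub>R mat 1 - A"
  have ME: "M *v (E *v w) = (K *\<^sub>R mat 1 + A) *v w" for w
    using shift by (simp add: M_def matrix_vector_mul_assoc)
  have "M *v ((E - mat 1) *v (matrix_inv A *v f))
      = M *v (E *v (matrix_inv A *v f)) - M *v (matrix_inv A *v f)"
    by (simp add: matrix_vector_mult_diff_distrib matrix_vector_mult_diff_rdistrib)
  also have "\<dots> = 2 *\<^sub>R (A *v (matrix_inv A *v f))"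
    unfolding ME by (simp add: M_def algebra_simps scaleR_mat_1_mult_vector scaleR_2)
  also have "\<dots> = 2 *\<^sub>R f"
    by (simp add: matrix_vector_mul_assoc matrix_inv_right[OF inv_A])
  finally have image:
    "M *v (E *v z0 + (E - mat 1) *v (matrix_inv A *v f)) = (K *\<^sub>R mat 1 + A) *v z0 + 2 *\<^sub>R f"
    by (simp add: ME matrix_vector_right_distrib)
  have expand: "M *v z1 = K *\<^sub>R z1 - A *v z1" "(K *\<^sub>R mat 1 + A) *v z0 = K *\<^sub>R z0 + A *v z0"
    by (simp_all only: M_def matrix_vector_mult_diff_rdistrib matrix_vector_mult_add_rdistrib
        scaleR_mat_1_mult_vector)
  have "K *\<^sub>R (z1 - z0) = A *v (z0 + z1) + 2 *\<^sub>R f \<longleftrightarrow> M *v z1 = (K *\<^sub>R mat 1 + A) *v z0 + 2 *\<^sub>R f"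
    unfolding expand
    by (simp add: matrix_vector_right_distrib scaleR_diff_right eq_diff_eq diff_eq_eq add_ac)
  also have "\<dots> \<longleftrightarrow> z1 = E *v z0 + (E - mat 1) *v (matrix_inv A *v f)"
    using inj_matrix_vector_mult[OF inv_shift] image unfolding M_def[symmetric] inj_on_def
    by (metis UNIV_I)
  finally show ?thesis .
qed

lemma traceless_2x2_square:
  fixes a b c :: real
  shows "(vector [vector [a, b], vector [c, - a]] :: real^2^2) ** vector [vector [a, b], vector [c, - a]]
           = (a\<^sup>2 + b * c) *\<^sub>R mat 1"
  by (simp add: vec_eq_iff forall_2 matrix_matrix_mult_def sum_2 mat_def power2_eq_square)

lemma det_shift_traceless_2x2:
  fixes a b c K :: real
  shows "det (K *\<^sub>R mat 1 - (vector [vector [a, b], vector [c, - a]] :: real^2^2)) = K\<^sup>2 - (a\<^sup>2 + b * c)"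
  by (simp add: det_2 mat_def power2_eq_square algebra_simps)

lemma mpow_Suc: "mpow A (Suc n) = A ** mpow A n"
  by (simp add: mpow_def)

lemma mpow_scaleR: "mpow (h *\<^sub>R (A :: real^'n^'n)) n = (h ^ n) *\<^sub>R mpow A n"
  by (induction n) (simp_all add: mpow_Suc matrix_scalar_ac scalar_matrix_assoc[symmetric] mpow_def)

lemma mpow_of_square_scalar:
  fixes A :: "real^'n^'n"
  assumes sq: "A ** A = (- s) *\<^sub>R mat 1"
  shows "mpow A n = (- s) ^ (n div 2) *\<^sub>R (if even n then mat 1 else A)"
proof (induction n)
  case 0
  then show ?case by (simp add: mpow_def)
next
  case (Suc n)
  show ?case
  proof (cases "even n")
    case True
    with Suc show ?thesis by (simp add: mpow_Suc matrix_scalar_ac)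
  next
    case False
    then have "Suc n div 2 = Suc (n div 2)" by presburger
    with Suc False show ?thesis
      by (simp add: mpow_Suc matrix_scalar_ac scalar_matrix_assoc[symmetric] sq)
  qed
qed

text \<open>Power series in \<open>s = \<omega>\<^sup>2\<close> of \<open>cos (\<omega> h)\<close> and \<open>sin (\<omega> h) / \<omega>\<close>.\<close>
definition cos_series :: "real \<Rightarrow> real \<Rightarrow> nat \<Rightarrow> real" where
  "cos_series s h n = (if even n then h ^ n * (- s) ^ (n div 2) / fact n else 0)"

definition sin_div_series :: "real \<Rightarrow> real \<Rightarrow> nat \<Rightarrow> real" where
  "sin_div_series s h n = (if even n then 0 else h ^ n * (- s) ^ (n div 2) / fact n)"

lemma mexp_of_square_scalar:
  fixes A :: "real^'n^'n"
  assumes sq: "A ** A = (- s) *\<^sub>R mat 1"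
    and C: "cos_series s h sums C" and D: "sin_div_series s h sums D"
  shows "mexp (h *\<^sub>R A) = C *\<^sub>R mat 1 + D *\<^sub>R A"
proof -
  have "(\<lambda>n. (1 / fact n) *\<^sub>R mpow (h *\<^sub>R A) n)
          = (\<lambda>n. cos_series s h n *\<^sub>R mat 1 + sin_div_series s h n *\<^sub>R A)"
    by (simp add: fun_eq_iff mpow_scaleR mpow_of_square_scalar[OF sq] cos_series_def sin_div_series_def)
  moreover have "(\<lambda>n. cos_series s h n *\<^sub>R mat 1 + sin_div_series s h n *\<^sub>R A)
      sums (C *\<^sub>R mat 1 + D *\<^sub>R A)"
    by (intro sums_add sums_scaleR_left C D)
  ultimately show ?thesis unfolding mexp_def by (simp add: sums_iff)
qed

lemma shifted_mult_cos_sin: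
  fixes A :: "real^'n^'n"
  assumes sq: "A ** A = (- s) *\<^sub>R mat 1"
    and "K * D - C = 1" and "K * C + s * D = K"
  shows "(K *\<^sub>R mat 1 - A) ** (C *\<^sub>R mat 1 + D *\<^sub>R A) = K *\<^sub>R mat 1 + A"
proof -
  have "(K *\<^sub>R mat 1 - A) ** (C *\<^sub>R mat 1 + D *\<^sub>R A) = (K * C + s * D) *\<^sub>R mat 1 + (K * D - C) *\<^sub>R A"
    by (simp add: matrix_add_ldistrib matrix_diff_rdistrib matrix_scalar_ac sq
        scalar_matrix_assoc[symmetric] algebra_simps)
  with assms(2,3) show ?thesis by simp
qed

lemma cos_series_sums_cos:
  assumes "s > 0"
  shows "cos_series s h sums cos (sqrt s * h)"
proof -
  have "cos_coeff n *\<^sub>R (sqrt s * h) ^ n = cos_series s h n" for n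
  proof (cases "even n")
    case True
    then obtain k where k: "n = 2 * k" by blast
    have "sqrt s ^ (2 * k) = s ^ k" using assms by (simp add: power_mult)
    then show ?thesis using assms by (simp add: k cos_coeff_def cos_series_def power_mult_distrib power_minus')
  qed (simp add: cos_coeff_def cos_series_def)
  then show ?thesis using cos_converges[of "sqrt s * h"] by simp
qed

lemma sin_div_series_sums_sin:
  assumes "s > 0"
  shows "sin_div_series s h sums (sin (sqrt s * h) / sqrt s)"
proof -
  have "sin_coeff n *\<^sub>R (sqrt s * h) ^ n / sqrt s = sin_div_series s h n" for n
  proof (cases "even n")
    case False
    then obtain k where k: "n = 2 * k + 1" using oddE by blast
    have "sqrt s ^ (2 * k) = s ^ k" using assms by (simp add: power_mult)
    then show ?thesis using assms by (simp add: k sin_coeff_def sin_div_series_def power_mult_distrib power_minus')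
  qed (simp add: sin_coeff_def sin_div_series_def)
  then show ?thesis using sums_divide[OF sin_converges[of "sqrt s * h"], of "sqrt s"] by simp
qed

lemma cos_series_sums_cosh:
  assumes "s < 0"
  shows "cos_series s h sums cosh (sqrt (- s) * h)"
proof -
  have "(if even n then (sqrt (- s) * h) ^ n /\<^sub>R fact n else 0) = cos_series s h n" for n
  proof (cases "even n")
    case True
    then obtain k where k: "n = 2 * k" by blast
    have "sqrt (- s) ^ (2 * k) = (- s) ^ k" using assms by (simp add: power_mult)
    then show ?thesis using assms by (simp add: k cos_series_def power_mult_distrib divide_inverse mult_ac)
  qed (simp add: cos_series_def)
  then show ?thesis using cosh_converges[of "sqrt (- s) * h"] by simp
qed

lemma sin_div_series_sums_sinh:
  assumes "s < 0"
  shows "sin_div_series s h sums (sinh (sqrt (- s) * h) / sqrt (- s))"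
proof -
  have "(if even n then 0 else (sqrt (- s) * h) ^ n /\<^sub>R fact n) / sqrt (- s) = sin_div_series s h n" for n
  proof (cases "even n")
    case False
    then obtain k where k: "n = 2 * k + 1" using oddE by blast
    have "sqrt (- s) ^ (2 * k) = (- s) ^ k" using assms by (simp add: power_mult)
    then show ?thesis using assms by (simp add: k sin_div_series_def power_mult_distrib divide_inverse mult_ac)
  qed (simp add: sin_div_series_def)
  then show ?thesis using sums_divide[OF sinh_converges[of "sqrt (- s) * h"], of "sqrt (- s)"] by simp
qed

lemma cos_series_zero_sums: "cos_series 0 h sums 1"
proof -
  have "cos_series 0 h = (\<lambda>n. if n = 0 then 1 else 0)"
    by (auto simp: fun_eq_iff cos_series_def)
  then show ?thesis using sums_single[of 0 "\<lambda>_. 1::real"] by simp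
qed

lemma sin_div_series_zero_sums: "sin_div_series 0 h sums h"
proof -
  have "sin_div_series 0 h = (\<lambda>n. if n = 1 then h else 0)"
    by (auto simp: fun_eq_iff sin_div_series_def elim: oddE)
  then show ?thesis using sums_single[of 1 "\<lambda>_. h"] by simp
qed

lemma wcot_half_angle_pos:
  assumes s: "s > 0" and sin_nz: "sin (sqrt s * h / 2) \<noteq> 0"
  shows "wcot s h * (sin (sqrt s * h) / sqrt s) - cos (sqrt s * h) = 1"
    and "wcot s h * cos (sqrt s * h) + s * (sin (sqrt s * h) / sqrt s) = wcot s h"
proof -
  define w where "w = sqrt s"
  define sn where "sn = sin (w * h / 2)"
  define cs where "cs = cos (w * h / 2)"
  have w: "w > 0" "w\<^sup>2 = s" using s by (auto simp: w_def)
  have sn: "sn \<noteq> 0" using sin_nz by (simp add: sn_def w_def)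
  have sc: "sn\<^sup>2 + cs\<^sup>2 = 1" by (simp add: sn_def cs_def)
  have wh: "w * h = 2 * (w * h / 2)" by simp
  have K: "wcot s h = w * cs / sn" using s by (simp add: wcot_def cot_def w_def sn_def cs_def)
  have C: "cos (sqrt s * h) = cs\<^sup>2 - sn\<^sup>2"
    by (subst w_def[symmetric], subst wh) (simp only: cos_double cs_def sn_def)
  have D: "sin (sqrt s * h) / sqrt s = 2 * sn * cs / w"
    by (subst (1 2) w_def[symmetric], subst wh) (simp only: sin_double cs_def sn_def)
  show "wcot s h * (sin (sqrt s * h) / sqrt s) - cos (sqrt s * h) = 1"
    unfolding K C D using sn w(1) sc by (simp add: field_simps power2_eq_square; algebra)
  have "w * cs / sn * (cs\<^sup>2 - sn\<^sup>2) + w\<^sup>2 * (2 * sn * cs / w) = w * cs / sn"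
    using sn w(1) sc by (simp add: field_simps power2_eq_square; algebra)
  then show "wcot s h * cos (sqrt s * h) + s * (sin (sqrt s * h) / sqrt s) = wcot s h"
    unfolding K C D w(2) .
qed

lemma wcot_half_angle_neg:
  assumes s: "s < 0" and h: "h > 0"
  shows "wcot s h * (sinh (sqrt (- s) * h) / sqrt (- s)) - cosh (sqrt (- s) * h) = 1"
    and "wcot s h * cosh (sqrt (- s) * h) + s * (sinh (sqrt (- s) * h) / sqrt (- s)) = wcot s h"
    and "(wcot s h)\<^sup>2 + s \<noteq> 0"
proof -
  define w where "w = sqrt (- s)"
  define sn where "sn = sinh (w * h / 2)"
  define cs where "cs = cosh (w * h / 2)"
  have w: "w > 0" "s = - w\<^sup>2" using s by (auto simp: w_def)
  have sn: "sn > 0" using w h by (simp add: sn_def)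
  have sc: "cs\<^sup>2 = sn\<^sup>2 + 1" by (simp add: sn_def cs_def cosh_square_eq)
  have wh: "w * h = 2 * (w * h / 2)" by simp
  have K: "wcot s h = w * cs / sn" using s by (simp add: wcot_def w_def sn_def cs_def)
  have C: "cosh (sqrt (- s) * h) = cs\<^sup>2 + sn\<^sup>2"
    by (subst w_def[symmetric], subst wh) (simp only: cosh_double cs_def sn_def)
  have D: "sinh (sqrt (- s) * h) / sqrt (- s) = 2 * sn * cs / w"
    by (subst (1 2) w_def[symmetric], subst wh) (simp only: sinh_double cs_def sn_def)
  show "wcot s h * (sinh (sqrt (- s) * h) / sqrt (- s)) - cosh (sqrt (- s) * h) = 1"
    unfolding K C D using sn w(1) sc by (simp add: field_simps power2_eq_square; algebra)
  have "w * cs / sn * (cs\<^sup>2 + sn\<^sup>2) + (- w\<^sup>2) * (2 * sn * cs / w) = w * cs / sn"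
    using sn w(1) sc by (simp add: field_simps power2_eq_square; algebra)
  then show "wcot s h * cosh (sqrt (- s) * h) + s * (sinh (sqrt (- s) * h) / sqrt (- s)) = wcot s h"
    by (simp only: K C D) (simp add: w(2))
  have "(w * cs / sn)\<^sup>2 - w\<^sup>2 = w\<^sup>2 / sn\<^sup>2"
    using sn sc by (simp add: field_simps power2_eq_square; algebra)
  then show "(wcot s h)\<^sup>2 + s \<noteq> 0" unfolding K using w sn by simp
qed

lemma wcot_half_angle_identities:
  assumes h: "h > 0" and sin_nz: "s > 0 \<Longrightarrow> sin (sqrt s * h / 2) \<noteq> 0"
  obtains C D where "cos_series s h sums C" "sin_div_series s h sums D"
    and "wcot s h * D - C = 1" "wcot s h * C + s * D = wcot s h" "(wcot s h)\<^sup>2 + s \<noteq> 0"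
proof (cases s "0 :: real" rule: linorder_cases)
  case less
  then show ?thesis
    using that cos_series_sums_cosh sin_div_series_sums_sinh wcot_half_angle_neg[OF less h] by blast
next
  case equal
  show ?thesis
    using h by (intro that[of 1 h])
      (simp_all add: equal wcot_def cos_series_zero_sums sin_div_series_zero_sums)
next
  case greater
  have "(wcot s h)\<^sup>2 + s > 0" using greater by (simp add: add_nonneg_pos)
  then show ?thesis
    using that cos_series_sums_cos sin_div_series_sums_sin wcot_half_angle_pos[OF greater sin_nz]
      greater by (metis less_irrefl)
qed

lemma linearized_scheme_iff:
  fixes H :: "real \<Rightarrow> real \<Rightarrow> real"
  assumes K: "K + pdp (pdx H) xb pb \<noteq> 0"
  shows "scheme_res H (2 / (K + pdp (pdx H) xb pb)) (xb, pb, xb, pb)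
           + scheme_linearization H xb pb (2 / (K + pdp (pdx H) xb pb)) (\<xi>0, \<eta>0, \<xi>1, \<eta>1) = 0
     \<longleftrightarrow> K *\<^sub>R (vector [\<xi>1, \<eta>1] - vector [\<xi>0, \<eta>0])
           = Fjac H xb pb *v (vector [\<xi>0, \<eta>0] + vector [\<xi>1, \<eta>1]) + 2 *\<^sub>R Fvec H xb pb"
  using K
  by (simp add: scheme_res_def scheme_linearization_def rhs1_def rhs2_def Fjac_def Fvec_def
      vec_eq_iff forall_2 matrix_vector_mult_def sum_2 zero_prod_def field_simps)
    (auto simp: algebra_simps)

theorem proposition5p4:
  fixes H :: "real \<Rightarrow> real \<Rightarrow> real" and xb pb h :: real
  defines "Hxx \<equiv> pdx (pdx H) xb pb"
      and "Hxp \<equiv> pdp (pdx H) xb pb"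
      and "Hpp \<equiv> pdp (pdp H) xb pb"
  defines "s \<equiv> Hxx * Hpp - Hxp ^ 2"
  defines "\<delta> \<equiv> 2 / (wcot s h + Hxp)"
  assumes smooth: "smooth2 H"
      and step_pos: "h > 0"
      and Finv: "invertible (Fjac H xb pb)"
      and cot_def: "s > 0 \<Longrightarrow> sin (sqrt s * h / 2) \<noteq> 0"
      and denom: "wcot s h + Hxp \<noteq> 0"
  shows "\<exists>L. (scheme_res H \<delta> has_derivative L) (at (xb, pb, xb, pb)) \<and>
             (\<forall>\<xi>0 \<eta>0 \<xi>1 \<eta>1.
                scheme_res H \<delta> (xb, pb, xb, pb) + L (\<xi>0, \<eta>0, \<xi>1, \<eta>1) = 0
                \<longleftrightarrow> vector [\<xi>1, \<eta>1] = exact_step H xb pb h (vector [\<xi>0, \<eta>0]))"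
proof -
  define K A where "K = wcot s h" and "A = Fjac H xb pb"
  have A: "A = vector [vector [Hxp, Hpp], vector [- Hxx, - Hxp]]"
    by (simp add: A_def Fjac_def Hxx_def Hxp_def Hpp_def)
  have sq: "A ** A = (- s) *\<^sub>R mat 1"
    using traceless_2x2_square[of Hxp Hpp "- Hxx"] by (simp add: A s_def)
  obtain C D where CD: "cos_series s h sums C" "sin_div_series s h sums D"
    "K * D - C = 1" "K * C + s * D = K" "K\<^sup>2 + s \<noteq> 0"
    using wcot_half_angle_identities[OF step_pos cot_def] unfolding K_def by blast
  have shift: "(K *\<^sub>R mat 1 - A) ** mexp (h *\<^sub>R A) = K *\<^sub>R mat 1 + A"
    using mexp_of_square_scalar[OF sq CD(1,2)] shifted_mult_cos_sin[OF sq CD(3,4)] by simp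
  have "det (K *\<^sub>R mat 1 - A) \<noteq> 0"
    using det_shift_traceless_2x2[of K Hxp Hpp "- Hxx"] CD(5) by (simp add: A s_def mult.commute)
  then have inv_shift: "invertible (K *\<^sub>R mat 1 - A)" by (simp add: invertible_det_nz)
  have "\<delta> \<noteq> 0" using denom by (simp add: \<delta>_def)
  with smooth show ?thesis
    using linearized_scheme_iff[of K H xb pb] denom
      implicit_midpoint_step_iff[OF shift inv_shift Finv[folded A_def]]
    by (intro exI[of _ "scheme_linearization H xb pb \<delta>"] conjI allI scheme_res_has_derivative)
      (simp_all add: exact_step_def A_def K_def \<delta>_def Hxp_def)
qed

end
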